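(* For $O\in\mathbb{R}^2$ let $v$ be a uniform random point in $[0,1]^2$, $g_1(O):=\mathbb{E}(d(O,v))$, and $g_2(O):=\mathbb{E}\left(\min\{d(O,v),\tfrac34 g_1(O)\}\right)$. Then for all $O,O'\in\mathbb{R}^2$, $|g_2(O)-g_2(O')|\le d(O,O')$.
   Context: $d$ is Euclidean distance. *)

theory Defs
  imports "HOL-Probability.Probability"
begin

definition unit_sq_unif :: "(real^2) measure" where
  "unit_sq_unif = uniform_measure lborel (cbox 0 1)"

definition g1 :: "real^2 \<Rightarrow> real" where
  "g1 O' = (\<integral>v. dist O' v \<partial>unit_sq_unif)"

definition g2 :: "real^2 \<Rightarrow> real" where
  "g2 O' = (\<integral>v. min (dist O' v) (3/4 * g1 O') \<partial>unit_sq_unif)"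

end

theory Submission
  imports Defs
begin

text \<open>Both g1 and g2 are averages over v of functions of O that are 1-Lipschitz for every fixed v:
  d(O, v) is 1-Lipschitz in O, so its average g1 is, so is 3/4 g1, and the pointwise minimum of
  two 1-Lipschitz functions is again 1-Lipschitz. Averaging against a probability measure
  preserves the Lipschitz constant.\<close>

lemma lipschitz_on_dist_left: "1-lipschitz_on U (\<lambda>x. dist x v)"
proof (rule lipschitz_onI)
  fix x y
  show "dist (dist x v) (dist y v) \<le> 1 * dist x y"
    using dist_triangle2[of x v y] dist_triangle2[of y v x]
    by (simp add: dist_real_def abs_le_iff dist_commute)
qed simp

lemma lipschitz_on_min:
  fixes f g :: "'a::metric_space \<Rightarrow> real"
  assumes "C-lipschitz_on U f" "C-lipschitz_on U g"
  shows "C-lipschitz_on U (\<lambda>x. min (f x) (g x))"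
proof (rule lipschitz_onI)
  show "0 \<le> C" using assms(1) by (rule lipschitz_on_nonneg)
  fix x y assume "x \<in> U" "y \<in> U"
  then have "\<bar>f x - f y\<bar> \<le> C * dist x y" "\<bar>g x - g y\<bar> \<le> C * dist x y"
    using assms by (auto dest: lipschitz_onD simp: dist_real_def)
  then show "dist (min (f x) (g x)) (min (f y) (g y)) \<le> C * dist x y"
    by (simp add: dist_real_def min_def abs_le_iff)
qed

lemma (in prob_space) lipschitz_on_expectation:
  fixes f :: "'b::metric_space \<Rightarrow> 'a \<Rightarrow> 'c::{banach, second_countable_topology}"
  assumes integrable: "\<And>x. x \<in> U \<Longrightarrow> integrable M (f x)"
    and lipschitz: "AE v in M. C-lipschitz_on U (\<lambda>x. f x v)"
  shows "C-lipschitz_on U (\<lambda>x. expectation (f x))"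
proof (rule lipschitz_onI)
  have "AE v in M. 0 \<le> C"
    using lipschitz by eventually_elim (rule lipschitz_on_nonneg)
  then show "0 \<le> C" by simp
  fix x y assume xy: "x \<in> U" "y \<in> U"
  have "dist (expectation (f x)) (expectation (f y)) = norm (expectation (\<lambda>v. f x v - f y v))"
    using xy integrable by (simp add: dist_norm)
  also have "\<dots> \<le> expectation (\<lambda>v. norm (f x v - f y v))"
    by (rule integral_norm_bound)
  also have "\<dots> \<le> expectation (\<lambda>v. C * dist x y)"
  proof (rule integral_mono_AE)
    show "AE v in M. norm (f x v - f y v) \<le> C * dist x y"
      using lipschitz by eventually_elim (use xy in \<open>auto dest: lipschitz_onD simp: dist_norm\<close>)
  qed (use xy integrable in auto)
  also have "\<dots> = C * dist x y"
    by (simp add: prob_space)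
  finally show "dist (expectation (f x)) (expectation (f y)) \<le> C * dist x y" .
qed

lemma integrable_uniform_measure_continuous:
  fixes f :: "'a::euclidean_space \<Rightarrow> real"
  assumes "compact S" "emeasure lborel S \<noteq> 0" "continuous_on UNIV f"
  shows "integrable (uniform_measure lborel S) f"
proof -
  interpret prob_space "uniform_measure lborel S"
    using assms emeasure_compact_finite[OF assms(1)]
    by (intro prob_space_uniform_measure) (auto simp: compact_imp_closed)
  obtain B where B: "\<And>x. x \<in> S \<Longrightarrow> norm (f x) \<le> B"
    using compact_imp_bounded[OF compact_continuous_image[OF continuous_on_subset[OF assms(3)] assms(1)]]
    by (auto simp: bounded_iff)
  have "AE x in uniform_measure lborel S. norm (f x) \<le> B"
    using assms(1) B by (intro AE_uniform_measureI) (auto simp: compact_imp_closed)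
  moreover have "f \<in> borel_measurable (uniform_measure lborel S)"
    using borel_measurable_continuous_onI[OF assms(3)]
    by (simp add: measurable_cong_sets[OF sets_uniform_measure refl])
  ultimately show ?thesis
    by (rule integrable_const_bound)
qed

lemma emeasure_unit_square: "emeasure lborel (cbox (0::real^2) 1) = 1"
proof -
  have "(1::real^2) \<bullet> b = 1" if "b \<in> Basis" for b
    using that by (auto simp: Basis_vec_def inner_axis)
  then show ?thesis
    by (simp add: emeasure_lborel_cbox_eq)
qed

lemma prob_space_unit_sq_unif: "prob_space unit_sq_unif"
  unfolding unit_sq_unif_def by (rule prob_space_uniform_measure) (simp_all add: emeasure_unit_square)

lemma integrable_unit_sq_unif:
  "continuous_on UNIV f \<Longrightarrow> integrable unit_sq_unif (f :: real^2 \<Rightarrow> real)"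
  unfolding unit_sq_unif_def
  by (rule integrable_uniform_measure_continuous) (simp_all add: emeasure_unit_square)

lemma lipschitz_on_g1: "1-lipschitz_on UNIV g1"
  unfolding g1_def
  by (intro prob_space.lipschitz_on_expectation prob_space_unit_sq_unif integrable_unit_sq_unif
      continuous_intros AE_I2 lipschitz_on_dist_left)

theorem lemma20:
  fixes P Q :: "real^2"
  shows "\<bar>g2 P - g2 Q\<bar> \<le> dist P Q"
proof -
  have "(3/4 * 1)-lipschitz_on UNIV (\<lambda>z. 3/4 * g1 z)"
    by (intro lipschitz_on_cmult_real_nonneg lipschitz_on_g1) simp
  then have "1-lipschitz_on UNIV (\<lambda>z. 3/4 * g1 z)"
    by (rule lipschitz_on_le) simp
  then have "1-lipschitz_on UNIV g2"
    unfolding g2_def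
    by (intro prob_space.lipschitz_on_expectation prob_space_unit_sq_unif integrable_unit_sq_unif
        continuous_intros AE_I2 lipschitz_on_min lipschitz_on_dist_left)
  then show ?thesis
    by (auto dest: lipschitz_onD simp: dist_real_def)
qed

end
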